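(* Let $a<b<c$ be elements of $\mathcal{C}_n$ and let $k$ be an integer with $a+1\le k\le b$. Then the layer $\mathcal{L}^{k}_{a}\left(\triangle^{(n)}\{a,b,c\}\right)=\{a_kb_{n-k-i}c_i:\ 0\le i\le n-k\}$ is a subsemiring of $\triangle^{(n)}\{a,b,c\}$.
   Context: $\mathcal{C}_n=\{0,1,\dots,n-1\}$ with its usual order; $\widehat{\mathcal{E}}_{\mathcal{C}_n}$ is the set of all order-preserving maps $\mathcal{C}_n\to\mathcal{C}_n$ (not required to fix $0$), a semiring with $(\alpha+\beta)(x)=\max(\alpha(x),\beta(x))$ and $(\alpha\cdot\beta)(x)=\beta(\alpha(x))$. The notation $a_kb_\ell c_m$ (with $k+\ell+m=n$) denotes the map sending $0,\dots,k-1$ to $a$, the next $\ell$ elements to $b$ and the last $m$ elements to $c$ (factors with subscript $0$ are omitted). The triangle $\triangle^{(n)}\{a,b,c\}$ is the set of all $\alpha\in\widehat{\mathcal{E}}_{\mathcal{C}_n}$ with image in $\{a,b,c\}$. The layer $\mathcal{L}^{k}_{a}$ is the set of elements of the triangle mapping exactly $k$ elements of $\mathcal{C}_n$ to $a$. *)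

theory Defs
  imports Main
begin

text \<open>Maps C_n -> C_n are represented as functions nat => nat which are 0 outside
  {0..<n} (so that equality of maps is equality of functions).\<close>

definition ends :: "nat \<Rightarrow> (nat \<Rightarrow> nat) set" where
  "ends n = {f. (\<forall>x<n. f x < n) \<and> (\<forall>x y. x \<le> y \<longrightarrow> y < n \<longrightarrow> f x \<le> f y)
               \<and> (\<forall>x. n \<le> x \<longrightarrow> f x = 0)}"

definition splus :: "(nat \<Rightarrow> nat) \<Rightarrow> (nat \<Rightarrow> nat) \<Rightarrow> (nat \<Rightarrow> nat)" where
  "splus f g = (\<lambda>x. max (f x) (g x))"

definition stimes :: "nat \<Rightarrow> (nat \<Rightarrow> nat) \<Rightarrow> (nat \<Rightarrow> nat) \<Rightarrow> (nat \<Rightarrow> nat)" where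
  "stimes n f g = (\<lambda>x. if x < n then g (f x) else 0)"

definition triangle :: "nat \<Rightarrow> nat set \<Rightarrow> (nat \<Rightarrow> nat) set" where
  "triangle n A = {f \<in> ends n. \<forall>x<n. f x \<in> A}"

definition layer :: "nat \<Rightarrow> nat \<Rightarrow> nat \<Rightarrow> (nat \<Rightarrow> nat) set \<Rightarrow> (nat \<Rightarrow> nat) set" where
  "layer n k a T = {f \<in> T. card {x. x < n \<and> f x = a} = k}"

text \<open>a_k b_l c_m: first k elements to a, next l to b, next m to c (k+l+m = n).\<close>
definition step3 :: "nat \<Rightarrow> nat \<Rightarrow> nat \<Rightarrow> nat \<Rightarrow> nat \<Rightarrow> nat \<Rightarrow> nat \<Rightarrow> nat" where
  "step3 a k b l c m = (\<lambda>x. if x < k then a else if x < k + l then b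
                            else if x < k + l + m then c else 0)"

definition subsemiring :: "nat \<Rightarrow> (nat \<Rightarrow> nat) set \<Rightarrow> (nat \<Rightarrow> nat) set \<Rightarrow> bool" where
  "subsemiring n S T \<longleftrightarrow> S \<subseteq> T \<and> (\<forall>f\<in>S. \<forall>g\<in>S. splus f g \<in> S \<and> stimes n f g \<in> S)"

end

theory Submission
  imports Defs
begin

text \<open>An order-preserving map with image in \<open>{a, b, c}\<close> is determined by the sizes \<open>k\<close> and \<open>i\<close>
  of its fibres over \<open>a\<close> and \<open>c\<close>, since these fibres are an initial and a final segment of
  \<open>C_n\<close>; so the layer consists of the maps \<open>a_k b_(n-k-i) c_i\<close>. Such maps are closed under
  \<open>max\<close>, which takes the larger \<open>c\<close>-block. For a product \<open>\<alpha>\<beta>\<close> with \<open>\<alpha>, \<beta>\<close> in the layer,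
  \<open>a < k \<le> b < c\<close> forces \<open>\<beta> a = a\<close> and \<open>\<beta> b, \<beta> c \<in> {b, c}\<close>, so \<open>\<alpha>\<beta>\<close> again has exactly
  \<open>k\<close> points in its \<open>a\<close>-fibre.\<close>

lemma step3_eq_piecewise:
  assumes "k \<le> n" "i \<le> n - k"
  shows "step3 a k b (n - k - i) c i
       = (\<lambda>x. if x < k then a else if x < n - i then b else if x < n then c else 0)"
  using assms unfolding step3_def by auto

lemma down_closed_eq_lessThan_card:
  assumes "S \<subseteq> {..<n}" "\<And>x y. x \<le> y \<Longrightarrow> y \<in> S \<Longrightarrow> x \<in> S"
  shows "S = {..<card S}"
proof (cases "S = {}")
  case False
  have "finite S" using assms(1) finite_subset by blast
  define m where "m = Max S"
  with False \<open>finite S\<close> have "m \<in> S" by simp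
  then have "S = {..m}"
    using \<open>finite S\<close> assms(2) unfolding m_def by auto
  then show ?thesis by (simp add: lessThan_Suc_atMost)
qed simp

lemma up_closed_eq_atLeastLessThan_card:
  assumes "T \<subseteq> {..<n}" "\<And>x y. x \<le> y \<Longrightarrow> y < n \<Longrightarrow> x \<in> T \<Longrightarrow> y \<in> T"
  shows "T = {n - card T..<n}"
proof (cases "T = {}")
  case False
  have "finite T" using assms(1) finite_subset by blast
  define m where "m = Min T"
  with False \<open>finite T\<close> have "m \<in> T" by simp
  then have "T = {m..<n}"
    using \<open>finite T\<close> assms unfolding m_def by auto
  moreover have "m < n" using \<open>m \<in> T\<close> assms(1) by auto
  ultimately show ?thesis by simp
qed simp

lemma triangle_eq_step3:
  assumes f: "f \<in> triangle n {a, b, c}" and "a < b" "b < c"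
  defines "k \<equiv> card {x. x < n \<and> f x = a}" and "i \<equiv> card {x. x < n \<and> f x = c}"
  shows "k + i \<le> n" "f = step3 a k b (n - k - i) c i"
proof -
  have range: "\<And>x. x < n \<Longrightarrow> f x \<in> {a, b, c}"
    and mono: "\<And>x y. x \<le> y \<Longrightarrow> y < n \<Longrightarrow> f x \<le> f y"
    and zero: "\<And>x. n \<le> x \<Longrightarrow> f x = 0"
    using f unfolding triangle_def ends_def by auto
  define S where "S = {x. x < n \<and> f x = a}"
  define T where "T = {x. x < n \<and> f x = c}"
  have S: "S = {..<k}"
  proof -
    have "S = {..<card S}"
    proof (rule down_closed_eq_lessThan_card)
      fix x y assume "x \<le> y" "y \<in> S"
      then have "x < n" "f x \<le> a" using mono[of x y] unfolding S_def by auto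
      then show "x \<in> S" using range[of x] \<open>a < b\<close> \<open>b < c\<close> unfolding S_def by auto
    qed (auto simp: S_def)
    then show ?thesis unfolding k_def S_def .
  qed
  have T: "T = {n - i..<n}"
  proof -
    have "T = {n - card T..<n}"
    proof (rule up_closed_eq_atLeastLessThan_card)
      fix x y assume "x \<le> y" "y < n" "x \<in> T"
      then have "c \<le> f y" using mono[of x y] unfolding T_def by auto
      then show "y \<in> T" using range[of y] \<open>y < n\<close> \<open>a < b\<close> \<open>b < c\<close> unfolding T_def by auto
    qed (auto simp: T_def)
    then show ?thesis unfolding i_def T_def .
  qed
  have "k + i = card S + card T" unfolding k_def i_def S_def T_def ..
  also have "\<dots> = card (S \<union> T)"
    using \<open>a < b\<close> \<open>b < c\<close> by (intro card_Un_disjoint[symmetric]) (auto simp: S_def T_def)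
  also have "\<dots> \<le> card {..<n}"
    by (intro card_mono) (auto simp: S_def T_def)
  finally show ki: "k + i \<le> n" by simp
  have "f x = step3 a k b (n - k - i) c i x" for x
  proof (cases "x < n")
    case True
    have "x \<in> S \<longleftrightarrow> x < k" "x \<in> T \<longleftrightarrow> n - i \<le> x"
      using S T True by auto
    then have "f x = a \<longleftrightarrow> x < k" "f x = c \<longleftrightarrow> n - i \<le> x"
      using True unfolding S_def T_def by auto
    then show ?thesis using range[OF True] True ki unfolding step3_def by auto
  qed (use zero ki in \<open>auto simp: step3_def\<close>)
  then show "f = step3 a k b (n - k - i) c i" ..
qed

lemma step3_in_triangle:
  assumes "a < b" "b < c" "c < n" "k \<le> n" "i \<le> n - k"
  shows "step3 a k b (n - k - i) c i \<in> triangle n {a, b, c}"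
  using assms unfolding triangle_def ends_def step3_eq_piecewise[OF assms(4,5)] by auto

lemma card_step3_fibre:
  assumes "a < b" "b < c" "k \<le> n" "i \<le> n - k"
  shows "card {x. x < n \<and> step3 a k b (n - k - i) c i x = a} = k"
proof -
  have "{x. x < n \<and> step3 a k b (n - k - i) c i x = a} = {..<k}"
    using assms unfolding step3_eq_piecewise[OF assms(3,4)] by auto
  then show ?thesis by simp
qed

lemma layer_triangle_eq_step3:
  assumes "a < b" "b < c" "c < n" "k \<le> n"
  shows "layer n k a (triangle n {a, b, c}) = {step3 a k b (n - k - i) c i | i. i \<le> n - k}"
proof
  show "layer n k a (triangle n {a, b, c}) \<subseteq> {step3 a k b (n - k - i) c i | i. i \<le> n - k}"
  proof
    fix f assume "f \<in> layer n k a (triangle n {a, b, c})"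
    then have f: "f \<in> triangle n {a, b, c}" and k: "k = card {x. x < n \<and> f x = a}"
      unfolding layer_def by auto
    show "f \<in> {step3 a k b (n - k - i) c i | i. i \<le> n - k}"
      using triangle_eq_step3[OF f assms(1,2)] unfolding k[symmetric] by fastforce
  qed
  show "{step3 a k b (n - k - i) c i | i. i \<le> n - k} \<subseteq> layer n k a (triangle n {a, b, c})"
    using step3_in_triangle[OF assms] card_step3_fibre[OF assms(1,2,4)]
    unfolding layer_def by auto
qed

lemma splus_step3:
  assumes "a < b" "b < c" "k \<le> n" "i \<le> n - k" "j \<le> n - k"
  shows "splus (step3 a k b (n - k - i) c i) (step3 a k b (n - k - j) c j)
       = step3 a k b (n - k - max i j) c (max i j)"
  using assms unfolding splus_def step3_eq_piecewise[OF assms(3,4)]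
    step3_eq_piecewise[OF assms(3,5)] step3_eq_piecewise[OF assms(3) max.boundedI[OF assms(4,5)]]
  by (auto simp: fun_eq_iff)

lemma stimes_step3:
  assumes "a < k" "k \<le> b" "b < c" "c < n" "i \<le> n - k" "j \<le> n - k"
    and "l = (if n - j \<le> b then n - k else if n - j \<le> c then i else 0)"
  shows "stimes n (step3 a k b (n - k - i) c i) (step3 a k b (n - k - j) c j)
       = step3 a k b (n - k - l) c l"
    (is "stimes n ?f ?g = _")
proof -
  have "k \<le> n" "l \<le> n - k" using assms by auto
  have "?g a = a" "?g b = (if n - j \<le> b then c else b)" "?g c = (if n - j \<le> c then c else b)"
    using assms unfolding step3_eq_piecewise[OF \<open>k \<le> n\<close> assms(6)] by auto
  then show ?thesis
    using assms unfolding stimes_def step3_eq_piecewise[OF \<open>k \<le> n\<close> assms(5)]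
      step3_eq_piecewise[OF \<open>k \<le> n\<close> \<open>l \<le> n - k\<close>]
    by (auto simp: fun_eq_iff)
qed

theorem proposition27:
  fixes n a b c k :: nat
  assumes "a < b" "b < c" "c < n" "a + 1 \<le> k" "k \<le> b"
  shows "layer n k a (triangle n {a, b, c})
           = {step3 a k b (n - k - i) c i | i. i \<le> n - k}
         \<and> subsemiring n (layer n k a (triangle n {a, b, c})) (triangle n {a, b, c})"
proof -
  have "k \<le> n" using assms by simp
  note layer_eq = layer_triangle_eq_step3[OF assms(1-3) this]
  have "splus f g \<in> layer n k a (triangle n {a, b, c}) \<and>
        stimes n f g \<in> layer n k a (triangle n {a, b, c})"
    if "f \<in> layer n k a (triangle n {a, b, c})" "g \<in> layer n k a (triangle n {a, b, c})" for f g
  proof -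
    from that obtain i j where ij: "i \<le> n - k" "j \<le> n - k"
      and f: "f = step3 a k b (n - k - i) c i" and g: "g = step3 a k b (n - k - j) c j"
      unfolding layer_eq by auto
    have "a < k" using assms by simp
    note product = stimes_step3[OF this assms(5,2,3) ij refl]
    have "max i j \<le> n - k"
      "(if n - j \<le> b then n - k else if n - j \<le> c then i else 0) \<le> n - k"
      using ij by auto
    then show ?thesis
      unfolding layer_eq f g splus_step3[OF assms(1,2) \<open>k \<le> n\<close> ij] product by blast
  qed
  then show ?thesis
    using layer_eq unfolding subsemiring_def layer_def by auto
qed

end
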